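(* Let $d=n\ge2$ and let $P_1,\dots,P_d$ be real quadratic forms on $\mathbb{R}^d$ such that $\det[\nabla P_1(t);\dots;\nabla P_d(t)]\not\equiv0$ as a polynomial in $t$. Let $V\subset\mathbb{R}^{2d}$ be a linear subspace. (1) If $\dim V$ is odd, then $\{t:\dim(\pi_t(V))<(\dim V+1)/2\}$ is contained in the zero set of a nonzero polynomial of degree at most $d$. (2) If $\dim V$ is even, then either $\{t:\dim(\pi_t(V))<\dim V/2+1\}$ is contained in the zero set of a nonzero polynomial of degree at most $d$, or $\dim(\pi_t(V))\ge\dim V/2$ for all $t\in\mathbb{R}^d$.
   Context: For $t\in\mathbb{R}^d$, $V(t)\subset\mathbb{R}^{2d}$ is the linear subspace spanned by $(e_j,\partial_jP_1(t),\dots,\partial_jP_d(t))$, $j=1,\dots,d$, and $\pi_t$ is the orthogonal projection onto $V(t)$. *)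

theory Defs
  imports "HOL-Analysis.Analysis"
begin

definition quad_form :: "real^'n^'n \<Rightarrow> real^'n \<Rightarrow> real" where
  "quad_form A t = t \<bullet> (A *v t)"

definition partial_deriv :: "'n \<Rightarrow> (real^'n \<Rightarrow> real) \<Rightarrow> real^'n \<Rightarrow> real" where
  "partial_deriv j f t = deriv (\<lambda>s. f (t + s *\<^sub>R axis j 1)) 0"

definition orth_proj :: "'a::real_inner set \<Rightarrow> 'a \<Rightarrow> 'a" where
  "orth_proj W x = (THE p. p \<in> W \<and> (\<forall>w\<in>W. (x - p) \<bullet> w = 0))"

definition multi_indices :: "nat \<Rightarrow> ('n::finite \<Rightarrow> nat) set" where
  "multi_indices k = {\<alpha>. (\<Sum>i\<in>UNIV. \<alpha> i) \<le> k}"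

definition poly_eval :: "nat \<Rightarrow> (('n::finite \<Rightarrow> nat) \<Rightarrow> real) \<Rightarrow> real^'n \<Rightarrow> real" where
  "poly_eval k c t = (\<Sum>\<alpha>\<in>multi_indices k. c \<alpha> * (\<Prod>i\<in>UNIV. (t $ i) ^ (\<alpha> i)))"

definition in_nonzero_poly_zero_set :: "nat \<Rightarrow> (real^'n::finite) set \<Rightarrow> bool" where
  "in_nonzero_poly_zero_set k S \<longleftrightarrow>
     (\<exists>c. (\<exists>\<alpha>\<in>multi_indices k. c \<alpha> \<noteq> 0) \<and> (\<forall>t\<in>S. poly_eval k c t = 0))"

definition Vt :: "('n \<Rightarrow> real^'n \<Rightarrow> real) \<Rightarrow> real^'n \<Rightarrow> ((real^'n) \<times> (real^'n)) set" where
  "Vt P t = span (range (\<lambda>j. (axis j (1::real), \<chi> k. partial_deriv j (P k) t)))"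

end

theory Submission
  imports Defs
begin

text \<open>
  Let \<open>J(t)\<close> be the matrix of the gradients of the \<open>P\<^sub>k\<close>, and \<open>\<Phi>\<^sub>t(v) = v\<^sub>1 + J(t)\<^sup>T v\<^sub>2\<close>
  for \<open>v = (v\<^sub>1, v\<^sub>2)\<close>. The \<open>j\<close>-th coordinate of \<open>\<Phi>\<^sub>t(v)\<close> is the inner product of \<open>v\<close> with the
  \<open>j\<close>-th spanning vector of \<open>V(t)\<close>, so \<open>\<pi>\<^sub>t\<close> and \<open>\<Phi>\<^sub>t\<close> have the same kernel and
  \<open>dim \<pi>\<^sub>t(V) = dim \<Phi>\<^sub>t(V)\<close>.

  As the \<open>P\<^sub>k\<close> are quadratic, \<open>J\<close> is linear. Fix \<open>u\<close> with \<open>det J(u) \<noteq> 0\<close>. If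
  \<open>\<Phi>\<^sub>t(v) = \<Phi>\<^sub>s(v) = 0\<close> for \<open>s = t + u\<close>, then \<open>J(u)\<^sup>T v\<^sub>2 = 0\<close>, so \<open>v = 0\<close>. Hence
  \<open>dim \<pi>\<^sub>t(V) + dim \<pi>\<^sub>s(V) \<ge> dim V\<close>, and one of the two dimensions reaches the required
  bound (for even \<open>dim V\<close>, as soon as some \<open>dim \<pi>\<^sub>t(V)\<close> is below \<open>dim V / 2\<close>).

  It remains to see that the rank of \<open>\<Phi>\<^sub>t\<close> on \<open>V\<close> can drop below its value at a point \<open>t\<^sub>1\<close>
  only on the zero set of a polynomial of degree \<open>\<le> d\<close>. Choose \<open>u\<^sub>i \<in> V\<close> whose images
  \<open>w\<^sub>i = \<Phi>\<^sub>t\<^sub>1(u\<^sub>i)\<close> form a basis of \<open>\<Phi>\<^sub>t\<^sub>1(V)\<close>. The matrix \<open>(\<Phi>\<^sub>t(u\<^sub>i) \<bullet> w\<^sub>l)\<close>, padded by the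
  identity to size \<open>d \<times> d\<close>, has entries affine in \<open>t\<close>; its determinant does not vanish at
  \<open>t\<^sub>1\<close>, and it vanishes wherever the \<open>\<Phi>\<^sub>t(u\<^sub>i)\<close> are dependent.
\<close>

section \<open>Polynomial functions of bounded degree\<close>

definition monomial :: "('n::finite \<Rightarrow> nat) \<Rightarrow> real^'n \<Rightarrow> real" where
  "monomial \<alpha> t = (\<Prod>i\<in>UNIV. (t $ i) ^ (\<alpha> i))"

definition poly_deg_le :: "nat \<Rightarrow> (real^'n::finite \<Rightarrow> real) \<Rightarrow> bool" where
  "poly_deg_le k f \<longleftrightarrow> (\<exists>c. \<forall>t. f t = poly_eval k c t)"

lemma finite_multi_indices: "finite (multi_indices k :: ('n::finite \<Rightarrow> nat) set)"
proof (rule finite_subset)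
  show "multi_indices k \<subseteq> {\<alpha>::'n \<Rightarrow> nat. \<forall>i. \<alpha> i \<in> {..k}}"
  proof
    fix \<alpha> :: "'n \<Rightarrow> nat" assume "\<alpha> \<in> multi_indices k"
    then show "\<alpha> \<in> {\<alpha>. \<forall>i. \<alpha> i \<in> {..k}}"
      unfolding multi_indices_def using member_le_sum[of _ UNIV \<alpha>] by (auto intro: le_trans)
  qed
  show "finite {\<alpha>::'n \<Rightarrow> nat. \<forall>i. \<alpha> i \<in> {..k}}"
    using finite_PiE[of UNIV "\<lambda>_. {..k}", OF finite_class.finite_UNIV]
    by (simp add: PiE_UNIV_domain Pi_def)
qed

lemma poly_eval_monomial: "poly_eval k c t = (\<Sum>\<alpha>\<in>multi_indices k. c \<alpha> * monomial \<alpha> t)"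
  by (simp add: poly_eval_def monomial_def)

lemma monomial_mult: "monomial \<alpha> t * monomial \<beta> t = monomial (\<lambda>i. \<alpha> i + \<beta> i) t"
  by (simp add: monomial_def power_add prod.distrib)

lemma poly_deg_le_monomial: "\<gamma> \<in> multi_indices k \<Longrightarrow> poly_deg_le k (monomial \<gamma>)"
  unfolding poly_deg_le_def poly_eval_monomial
  by (intro exI[of _ "\<lambda>\<alpha>. if \<alpha> = \<gamma> then 1 else 0"] allI)
    (simp add: finite_multi_indices if_distrib[of "\<lambda>x. x * _"] cong: if_cong)

lemma poly_deg_le_mono: "poly_deg_le k f \<Longrightarrow> k \<le> k' \<Longrightarrow> poly_deg_le k' f"
proof -
  assume "poly_deg_le k f" "k \<le> k'"
  then obtain c where c: "\<And>t. f t = poly_eval k c t" by (auto simp: poly_deg_le_def)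
  have sub: "multi_indices k \<subseteq> multi_indices k'"
    using \<open>k \<le> k'\<close> by (auto simp: multi_indices_def)
  let ?c = "\<lambda>\<alpha>. if \<alpha> \<in> multi_indices k then c \<alpha> else 0"
  have "poly_eval k' ?c t = f t" for t
    unfolding c poly_eval_monomial
    by (rule sum.mono_neutral_cong_right) (use sub finite_multi_indices in auto)
  then show ?thesis by (metis poly_deg_le_def)
qed

lemma poly_deg_le_add: "poly_deg_le k f \<Longrightarrow> poly_deg_le k g \<Longrightarrow> poly_deg_le k (\<lambda>t. f t + g t)"
proof -
  assume "poly_deg_le k f" "poly_deg_le k g"
  then obtain c e where "\<And>t. f t = poly_eval k c t" "\<And>t. g t = poly_eval k e t"
    by (auto simp: poly_deg_le_def)
  then have "f t + g t = poly_eval k (\<lambda>\<alpha>. c \<alpha> + e \<alpha>) t" for t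
    by (simp add: poly_eval_monomial sum.distrib algebra_simps)
  then show ?thesis by (auto simp: poly_deg_le_def)
qed

lemma poly_deg_le_cmult: "poly_deg_le k f \<Longrightarrow> poly_deg_le k (\<lambda>t. a * f t)"
proof -
  assume "poly_deg_le k f"
  then obtain c where "\<And>t. f t = poly_eval k c t" by (auto simp: poly_deg_le_def)
  then have "a * f t = poly_eval k (\<lambda>\<alpha>. a * c \<alpha>) t" for t
    by (simp add: poly_eval_monomial sum_distrib_left algebra_simps)
  then show ?thesis by (auto simp: poly_deg_le_def)
qed

lemma poly_deg_le_const: "poly_deg_le k (\<lambda>t::real^'n::finite. a)"
proof -
  have "poly_deg_le 0 (\<lambda>t. a * monomial (\<lambda>_::'n. 0) t)"
    by (intro poly_deg_le_cmult poly_deg_le_monomial) (simp add: multi_indices_def)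
  then show ?thesis by (simp add: monomial_def poly_deg_le_mono[of 0])
qed

lemma poly_deg_le_sum:
  "finite I \<Longrightarrow> (\<And>i. i \<in> I \<Longrightarrow> poly_deg_le k (f i)) \<Longrightarrow> poly_deg_le k (\<lambda>t. \<Sum>i\<in>I. f i t)"
  by (induction I rule: finite_induct) (auto intro: poly_deg_le_add poly_deg_le_const)

lemma poly_deg_le_mult:
  fixes f g :: "real^'n::finite \<Rightarrow> real"
  assumes "poly_deg_le a f" "poly_deg_le b g"
  shows "poly_deg_le (a + b) (\<lambda>t. f t * g t)"
proof -
  obtain c e where c: "\<And>t. f t = poly_eval a c t" and e: "\<And>t. g t = poly_eval b e t"
    using assms by (auto simp: poly_deg_le_def)
  have "f t * g t = (\<Sum>\<alpha>\<in>multi_indices a. \<Sum>\<beta>\<in>multi_indices b.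
                       c \<alpha> * e \<beta> * monomial (\<lambda>i. \<alpha> i + \<beta> i) t)" for t
    by (simp add: c e poly_eval_monomial sum_product monomial_mult[symmetric] algebra_simps)
  moreover have "poly_deg_le (a + b) (\<lambda>t. \<Sum>\<alpha>\<in>multi_indices a. \<Sum>\<beta>\<in>multi_indices b.
                       c \<alpha> * e \<beta> * monomial (\<lambda>i. \<alpha> i + \<beta> i) t)"
    by (intro poly_deg_le_sum finite_multi_indices poly_deg_le_cmult poly_deg_le_monomial)
      (simp add: multi_indices_def sum.distrib add_mono)
  ultimately show ?thesis by simp
qed

lemma poly_deg_le_component: "poly_deg_le 1 (\<lambda>t. t $ i)"
proof -
  have "poly_deg_le 1 (monomial (\<lambda>j. if j = i then 1 else 0))"
    by (rule poly_deg_le_monomial) (simp add: multi_indices_def)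
  moreover have "monomial (\<lambda>j. if j = i then 1 else 0) = (\<lambda>t. t $ i)"
    by (simp add: fun_eq_iff monomial_def if_distrib cong: if_cong)
  ultimately show ?thesis by simp
qed

lemma poly_deg_le_inner_left: "poly_deg_le 1 (\<lambda>t. t \<bullet> c)"
proof -
  have "poly_deg_le (1 + 0) (\<lambda>t. t $ i * c $ i)" for i
    by (rule poly_deg_le_mult[OF poly_deg_le_component poly_deg_le_const])
  then show ?thesis
    unfolding inner_vec_def by (intro poly_deg_le_sum) auto
qed

lemma poly_deg_le_prod:
  "finite I \<Longrightarrow> (\<And>i. i \<in> I \<Longrightarrow> poly_deg_le 1 (f i)) \<Longrightarrow> poly_deg_le (card I) (\<lambda>t. \<Prod>i\<in>I. f i t)"
proof (induction I rule: finite_induct)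
  case (insert x F)
  then have "poly_deg_le (1 + card F) (\<lambda>t. f x t * (\<Prod>i\<in>F. f i t))"
    by (intro poly_deg_le_mult) auto
  with insert show ?case by simp
qed (simp add: poly_deg_le_const)

lemma poly_deg_le_det:
  fixes M :: "real^'n::finite \<Rightarrow> real^'m::finite^'m"
  assumes "\<And>i j. poly_deg_le 1 (\<lambda>t. M t $ i $ j)"
  shows "poly_deg_le CARD('m) (\<lambda>t. det (M t))"
  unfolding det_def by (intro poly_deg_le_sum poly_deg_le_cmult poly_deg_le_prod assms) auto

lemma in_nonzero_poly_zero_setI:
  assumes "poly_deg_le k f" "f t1 \<noteq> 0" "\<And>t. t \<in> S \<Longrightarrow> f t = 0"
  shows "in_nonzero_poly_zero_set k S"
proof -
  obtain c where c: "\<And>t. f t = poly_eval k c t"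
    using assms(1) by (auto simp: poly_deg_le_def)
  with assms(2) have "\<exists>\<alpha>\<in>multi_indices k. c \<alpha> \<noteq> 0"
    unfolding poly_eval_def by (metis (no_types, lifting) mult_eq_0_iff sum.neutral)
  with c assms(3) show ?thesis
    unfolding in_nonzero_poly_zero_set_def by auto
qed

lemma in_nonzero_poly_zero_set_subset:
  "in_nonzero_poly_zero_set k S \<Longrightarrow> T \<subseteq> S \<Longrightarrow> in_nonzero_poly_zero_set k T"
  unfolding in_nonzero_poly_zero_set_def by blast

section \<open>Orthogonal projection\<close>

lemma orth_proj_unique:
  fixes W :: "'a::real_inner set"
  assumes W: "subspace W"
    and p: "p \<in> W" "\<forall>w\<in>W. (x - p) \<bullet> w = 0"
    and q: "q \<in> W" "\<forall>w\<in>W. (x - q) \<bullet> w = 0"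
  shows "p = q"
proof -
  have "p - q \<in> W" using W p q by (simp add: subspace_diff)
  then have "(x - q) \<bullet> (p - q) - (x - p) \<bullet> (p - q) = 0" using p q by simp
  then have "(p - q) \<bullet> (p - q) = 0" by (simp add: inner_diff_left)
  then show ?thesis by simp
qed

lemma orth_proj_eqI:
  fixes W :: "'a::real_inner set"
  assumes "subspace W" "p \<in> W" "\<forall>w\<in>W. (x - p) \<bullet> w = 0"
  shows "orth_proj W x = p"
  unfolding orth_proj_def by (rule the_equality) (use assms orth_proj_unique in blast)+

lemma orth_proj:
  fixes W :: "'a::euclidean_space set"
  assumes "subspace W"
  shows "orth_proj W x \<in> W \<and> (\<forall>w\<in>W. (x - orth_proj W x) \<bullet> w = 0)"
proof -
  obtain p z where "p \<in> span W" "\<And>w. w \<in> span W \<Longrightarrow> orthogonal z w" "x = p + z"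
    using orthogonal_subspace_decomp_exists by blast
  then have "p \<in> W" "\<forall>w\<in>W. (x - p) \<bullet> w = 0"
    using assms by (auto simp: span_eq_iff[THEN iffD2, OF assms] orthogonal_def)
  with orth_proj_eqI[OF assms this] show ?thesis by simp
qed

lemma linear_orth_proj:
  fixes W :: "'a::euclidean_space set"
  assumes W: "subspace W"
  shows "linear (orth_proj W)"
proof (rule linearI)
  fix x y
  show "orth_proj W (x + y) = orth_proj W x + orth_proj W y"
    using orth_proj[OF W, of x] orth_proj[OF W, of y]
    by (intro orth_proj_eqI[OF W])
      (auto simp: subspace_add[OF W] inner_diff_left inner_add_left algebra_simps)
next
  fix c x
  show "orth_proj W (c *\<^sub>R x) = c *\<^sub>R orth_proj W x"
    using orth_proj[OF W, of x]
    by (intro orth_proj_eqI[OF W])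
      (auto simp: subspace_scale[OF W] simp flip: scaleR_right_diff_distrib)
qed

lemma orth_proj_span_eq_0_iff:
  fixes X :: "'a::euclidean_space set"
  shows "orth_proj (span X) x = 0 \<longleftrightarrow> (\<forall>w\<in>X. x \<bullet> w = 0)"
proof
  assume "orth_proj (span X) x = 0"
  then show "\<forall>w\<in>X. x \<bullet> w = 0"
    using orth_proj[of "span X" x] by (auto simp: span_base)
next
  assume "\<forall>w\<in>X. x \<bullet> w = 0"
  then have "\<forall>w\<in>span X. x \<bullet> w = 0"
    using orthogonal_to_span[of _ X x] by (auto simp: orthogonal_def)
  then show "orth_proj (span X) x = 0"
    by (intro orth_proj_eqI) (auto simp: span_zero)
qed

section \<open>Families of vectors and dimension\<close>

definition independent_family :: "'i set \<Rightarrow> ('i \<Rightarrow> 'a::real_vector) \<Rightarrow> bool" where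
  "independent_family S x \<longleftrightarrow> (\<forall>a. (\<Sum>i\<in>S. a i *\<^sub>R x i) = 0 \<longrightarrow> (\<forall>i\<in>S. a i = 0))"

lemma independent_familyD:
  "independent_family S x \<Longrightarrow> (\<Sum>i\<in>S. a i *\<^sub>R x i) = 0 \<Longrightarrow> i \<in> S \<Longrightarrow> a i = 0"
  unfolding independent_family_def by blast

lemma independent_family_cong:
  "(\<And>i. i \<in> S \<Longrightarrow> x i = y i) \<Longrightarrow> independent_family S x \<longleftrightarrow> independent_family S y"
  unfolding independent_family_def by (simp cong: sum.cong)

lemma inj_on_if_independent_family:
  assumes "finite S" "independent_family S x"
  shows "inj_on x S"
proof (rule inj_onI, rule ccontr)
  fix i j assume ij: "i \<in> S" "j \<in> S" "x i = x j" "i \<noteq> j"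
  define a where "a k = (if k = i then 1 else if k = j then -1 else 0 :: real)" for k
  have "a k *\<^sub>R x k = (if k = i then x i else 0) - (if k = j then x j else 0)" for k
    using ij by (auto simp: a_def)
  then have "(\<Sum>k\<in>S. a k *\<^sub>R x k) = 0"
    using assms(1) ij by (simp add: sum_subtractf)
  then have "a i = 0" by (rule independent_familyD[OF assms(2) _ ij(1)])
  then show False by (simp add: a_def)
qed

lemma independent_family_iff:
  assumes S: "finite S"
  shows "independent_family S x \<longleftrightarrow> inj_on x S \<and> independent (x ` S)"
proof
  assume ind: "independent_family S x"
  then have inj: "inj_on x S" by (rule inj_on_if_independent_family[OF S])
  moreover have "independent (x ` S)"
  proof (rule independent_if_scalars_zero)
    fix c v assume "(\<Sum>v\<in>x ` S. c v *\<^sub>R v) = 0" "v \<in> x ` S"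
    then obtain i where "i \<in> S" "v = x i" "(\<Sum>i\<in>S. c (x i) *\<^sub>R x i) = 0"
      by (auto simp: sum.reindex[OF inj])
    then show "c v = 0" using independent_familyD[OF ind, of "\<lambda>i. c (x i)"] by blast
  qed (use S in simp)
  ultimately show "inj_on x S \<and> independent (x ` S)" ..
next
  assume "inj_on x S \<and> independent (x ` S)"
  then have inj: "inj_on x S" and B: "independent (x ` S)" by auto
  show "independent_family S x"
    unfolding independent_family_def
  proof clarify
    fix a i assume sum0: "(\<Sum>i\<in>S. a i *\<^sub>R x i) = 0" and i: "i \<in> S"
    let ?c = "\<lambda>v. a (inv_into S x v)"
    have "(\<Sum>v\<in>x ` S. ?c v *\<^sub>R v) = 0"
      using sum0 by (simp add: sum.reindex[OF inj] inv_into_f_f[OF inj])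
    then have "?c (x i) = 0"
      using B[unfolded independent_explicit_module, rule_format, of "x ` S" ?c "x i"] S i by simp
    then show "a i = 0" by (simp add: inv_into_f_f[OF inj i])
  qed
qed

lemma card_le_dim_if_independent_family:
  fixes x :: "'i \<Rightarrow> 'a::euclidean_space"
  assumes "finite S" "independent_family S x" "x ` S \<subseteq> U"
  shows "card S \<le> dim U"
proof -
  have "inj_on x S" "independent (x ` S)"
    using assms by (auto simp: independent_family_iff)
  then show ?thesis
    using assms(3) independent_card_le_dim[of "x ` S" U] by (simp add: card_image)
qed

lemma obtain_independent_family_image:
  fixes f :: "'a \<Rightarrow> 'b::euclidean_space"
  assumes I: "finite I" "dim (f ` V) \<le> card I"
  obtains S u where "S \<subseteq> I" "card S = dim (f ` V)" "u ` S \<subseteq> V" "independent_family S (f \<circ> u)"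
proof -
  obtain B where B: "B \<subseteq> f ` V" "independent B" "card B = dim (f ` V)"
    by (rule basis_exists[of "f ` V"])
  obtain S where S: "S \<subseteq> I" "card S = card B" "finite S"
    by (rule obtain_subset_with_card_n[of "card B" I]) (use I B(3) in simp)
  have "finite B" using B(2) finiteI_independent by blast
  then obtain e where e: "bij_betw e S B"
    using finite_same_card_bij[OF S(3) _ S(2)] by blast
  define u where "u i = (SOME v. v \<in> V \<and> f v = e i)" for i
  have u: "u i \<in> V \<and> f (u i) = e i" if "i \<in> S" for i
  proof -
    have "e i \<in> f ` V" using bij_betwE[OF e] B(1) that by blast
    then have "\<exists>v. v \<in> V \<and> f v = e i" by (auto simp: image_iff)
    then show ?thesis unfolding u_def by (rule someI_ex)
  qed
  have "independent_family S e"
    using e B(2) by (simp add: independent_family_iff[OF S(3)] bij_betw_def)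
  moreover have "independent_family S (f \<circ> u) \<longleftrightarrow> independent_family S e"
    using u by (intro independent_family_cong) simp
  ultimately have "independent_family S (f \<circ> u)" by simp
  moreover have "u ` S \<subseteq> V" using u by blast
  ultimately show ?thesis using that[OF S(1)] S(2) B(3) by simp
qed

lemma dim_image_le_if_kernel_subset:
  fixes f :: "'a::euclidean_space \<Rightarrow> 'b::euclidean_space" and g :: "'a \<Rightarrow> 'c::euclidean_space"
  assumes f: "linear f" and g: "linear g" and V: "subspace V"
    and ker: "\<And>v. v \<in> V \<Longrightarrow> g v = 0 \<Longrightarrow> f v = 0"
  shows "dim (f ` V) \<le> dim (g ` V)"
proof -
  obtain S :: "nat set" and u where S: "S \<subseteq> {..<dim (f ` V)}" "card S = dim (f ` V)" "u ` S \<subseteq> V"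
    and ind: "independent_family S (f \<circ> u)"
    by (rule obtain_independent_family_image[of "{..<dim (f ` V)}" f V]) auto
  have "independent_family S (g \<circ> u)"
    unfolding independent_family_def
  proof (intro allI impI)
    fix a assume "(\<Sum>i\<in>S. a i *\<^sub>R (g \<circ> u) i) = 0"
    then have "g (\<Sum>i\<in>S. a i *\<^sub>R u i) = 0"
      by (simp add: linear_sum[OF g] linear_scale[OF g])
    moreover have "(\<Sum>i\<in>S. a i *\<^sub>R u i) \<in> V"
      using S(3) by (auto intro: subspace_sum[OF V] subspace_scale[OF V])
    ultimately have "f (\<Sum>i\<in>S. a i *\<^sub>R u i) = 0" by (rule ker[rotated])
    then have "(\<Sum>i\<in>S. a i *\<^sub>R (f \<circ> u) i) = 0"
      by (simp add: linear_sum[OF f] linear_scale[OF f])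
    then show "\<forall>i\<in>S. a i = 0" using independent_familyD[OF ind] by blast
  qed
  then have "card S \<le> dim (g ` V)"
    using S by (intro card_le_dim_if_independent_family) (auto intro: finite_subset[OF S(1)])
  with S(2) show ?thesis by simp
qed

lemma dim_image_eq_if_same_kernel:
  fixes f :: "'a::euclidean_space \<Rightarrow> 'b::euclidean_space" and g :: "'a \<Rightarrow> 'c::euclidean_space"
  assumes "linear f" "linear g" "subspace V" "\<And>v. v \<in> V \<Longrightarrow> f v = 0 \<longleftrightarrow> g v = 0"
  shows "dim (f ` V) = dim (g ` V)"
  using dim_image_le_if_kernel_subset[of f g V] dim_image_le_if_kernel_subset[of g f V] assms
  by (meson antisym)

lemma dim_le_dim_image_add:
  fixes f :: "'a::euclidean_space \<Rightarrow> 'b::euclidean_space" and g :: "'a \<Rightarrow> 'c::euclidean_space"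
  assumes f: "linear f" and g: "linear g" and V: "subspace V"
    and ker: "\<And>v. v \<in> V \<Longrightarrow> f v = 0 \<Longrightarrow> g v = 0 \<Longrightarrow> v = 0"
  shows "dim V \<le> dim (f ` V) + dim (g ` V)"
proof -
  define F where "F v = (f v, g v)" for v
  have F: "linear F"
    using f g unfolding F_def by (intro linearI) (simp_all add: linear_add linear_scale)
  have "inj_on F V"
  proof (rule inj_onI)
    fix x y assume xy: "x \<in> V" "y \<in> V" "F x = F y"
    then have "f (x - y) = 0" "g (x - y) = 0"
      by (simp_all add: F_def linear_diff[OF f] linear_diff[OF g])
    moreover have "x - y \<in> V" using xy subspace_diff[OF V] by blast
    ultimately show "x = y" using ker[of "x - y"] by simp
  qed
  then have "dim V = dim (F ` V)"
    using dim_image_eq[OF F, of V] V by (simp add: span_eq_iff[THEN iffD2, OF V])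
  also have "\<dots> \<le> dim (f ` V \<times> g ` V)"
    by (rule dim_subset) (auto simp: F_def)
  also have "\<dots> = dim (f ` V) + dim (g ` V)"
    by (intro dim_Times linear_subspace_image f g V)
  finally show ?thesis .
qed

section \<open>Rank drop of a polynomial family of maps\<close>

lemma det_nonzero_iff_kernel_trivial:
  fixes M :: "real^'n^'n"
  shows "det M \<noteq> 0 \<longleftrightarrow> (\<forall>x. M *v x = 0 \<longrightarrow> x = 0)"
  by (metis det_nz_iff_inj matrix_vector_mul_linear matrix_of_matrix_vector_mul linear_injective_0)

definition bordered_gram :: "'m::finite set \<Rightarrow> ('m \<Rightarrow> 'a::real_inner) \<Rightarrow> ('m \<Rightarrow> 'a) \<Rightarrow> real^'m^'m" where
  "bordered_gram S x w = (\<chi> l i. if l \<in> S \<and> i \<in> S then x i \<bullet> w l else if l = i then 1 else 0)"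

lemma bordered_gram_mult_component:
  "(bordered_gram S x w *v y) $ l = (if l \<in> S then (\<Sum>i\<in>S. y $ i *\<^sub>R x i) \<bullet> w l else y $ l)"
proof (cases "l \<in> S")
  case True
  have "(bordered_gram S x w *v y) $ l = (\<Sum>i\<in>UNIV. (if i \<in> S then x i \<bullet> w l * y $ i else 0))"
    unfolding matrix_vector_mult_def bordered_gram_def using True by (auto intro: sum.cong)
  also have "\<dots> = (\<Sum>i\<in>S. y $ i *\<^sub>R x i) \<bullet> w l"
    by (simp add: sum.If_cases inner_sum_left mult.commute)
  finally show ?thesis using True by simp
next
  case False
  then show ?thesis
    by (simp add: matrix_vector_mult_def bordered_gram_def if_distrib[of "\<lambda>r. r * _"] cong: if_cong)
qed

lemma det_bordered_gram_self_nonzero: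
  assumes "independent_family S w"
  shows "det (bordered_gram S w w) \<noteq> 0"
  unfolding det_nonzero_iff_kernel_trivial
proof (intro allI impI)
  fix y assume y: "bordered_gram S w w *v y = 0"
  define z where "z = (\<Sum>i\<in>S. y $ i *\<^sub>R w i)"
  have "z \<bullet> w l = 0" if "l \<in> S" for l
    using bordered_gram_mult_component[of S w w y l] y that by (simp add: z_def)
  then have "z \<bullet> z = 0"
    by (simp add: z_def inner_sum_right)
  then have "y $ i = 0" if "i \<in> S" for i
    using independent_familyD[OF assms _ that, of "\<lambda>i. y $ i"] by (simp add: z_def)
  moreover have "y $ l = 0" if "l \<notin> S" for l
    using bordered_gram_mult_component[of S w w y l] y that by simp
  ultimately show "y = 0" by (metis vec_eq_iff zero_index)
qed

lemma independent_family_if_det_bordered_gram: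
  assumes "det (bordered_gram S x w) \<noteq> 0"
  shows "independent_family S x"
  unfolding independent_family_def
proof (intro allI impI)
  fix a assume a: "(\<Sum>i\<in>S. a i *\<^sub>R x i) = 0"
  define y where "y = (\<chi> i. if i \<in> S then a i else 0)"
  have "(\<Sum>i\<in>S. y $ i *\<^sub>R x i) = 0"
    using a by (simp add: y_def cong: sum.cong)
  then have "bordered_gram S x w *v y = 0"
    by (simp add: vec_eq_iff bordered_gram_mult_component y_def)
  then have "y = 0"
    using assms det_nonzero_iff_kernel_trivial by blast
  then show "\<forall>i\<in>S. a i = 0" by (simp add: y_def vec_eq_iff) (metis (full_types))
qed

lemma in_nonzero_poly_zero_set_dim_image_less:
  fixes L :: "real^'n::finite \<Rightarrow> 'v \<Rightarrow> real^'m::finite"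
  assumes poly: "\<And>v j. poly_deg_le 1 (\<lambda>t. L t v $ j)"
  shows "in_nonzero_poly_zero_set CARD('m) {t. dim (L t ` V) < dim (L t1 ` V)}"
proof -
  have "dim (L t1 ` V) \<le> card (UNIV :: 'm set)"
    using dim_subset_UNIV[of "L t1 ` V"] by simp
  then obtain S :: "'m set" and u :: "'m \<Rightarrow> 'v" where S: "card S = dim (L t1 ` V)" "u ` S \<subseteq> V"
    and ind: "independent_family S (L t1 \<circ> u)"
    by (rule obtain_independent_family_image[OF finite_class.finite_UNIV])
  define Q where "Q t = bordered_gram S (\<lambda>i. L t (u i)) (\<lambda>i. L t1 (u i))" for t
  show ?thesis
  proof (rule in_nonzero_poly_zero_setI)
    show "poly_deg_le CARD('m) (\<lambda>t. det (Q t))"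
    proof (rule poly_deg_le_det)
      fix l i
      have "poly_deg_le (1 + 0) (\<lambda>t. L t (u i) $ j * L t1 (u l) $ j)" for j
        by (intro poly_deg_le_mult poly poly_deg_le_const)
      then have "poly_deg_le 1 (\<lambda>t. L t (u i) \<bullet> L t1 (u l))"
        unfolding inner_vec_def by (intro poly_deg_le_sum) auto
      moreover have "(\<lambda>t. Q t $ l $ i) = (if l \<in> S \<and> i \<in> S then (\<lambda>t. L t (u i) \<bullet> L t1 (u l))
          else (\<lambda>_. if l = i then 1 else 0))"
        by (auto simp: Q_def bordered_gram_def fun_eq_iff)
      ultimately show "poly_deg_le 1 (\<lambda>t. Q t $ l $ i)"
        by (simp add: poly_deg_le_const)
    qed
    show "det (Q t1) \<noteq> 0"
      using det_bordered_gram_self_nonzero[of S "\<lambda>i. L t1 (u i)"] ind by (simp add: Q_def o_def)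
    fix t assume t: "t \<in> {t. dim (L t ` V) < dim (L t1 ` V)}"
    show "det (Q t) = 0"
    proof (rule ccontr)
      assume "det (Q t) \<noteq> 0"
      then have "independent_family S (\<lambda>i. L t (u i))"
        unfolding Q_def by (rule independent_family_if_det_bordered_gram)
      then have "card S \<le> dim (L t ` V)"
        using S(2) by (intro card_le_dim_if_independent_family) auto
      with S(1) t show False by simp
    qed
  qed
qed

section \<open>The subspaces \<open>V(t)\<close> for quadratic forms\<close>

definition gradient_matrix :: "('m \<Rightarrow> real^'n \<Rightarrow> real) \<Rightarrow> real^'n \<Rightarrow> real^'n^'m" where
  "gradient_matrix P t = (\<chi> k j. partial_deriv j (P k) t)"

definition Vt_pairing :: "('n \<Rightarrow> real^'n \<Rightarrow> real) \<Rightarrow> real^'n \<Rightarrow> (real^'n) \<times> (real^'n) \<Rightarrow> real^'n" where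
  "Vt_pairing P t v = fst v + transpose (gradient_matrix P t) *v snd v"

lemma Vt_pairing_component:
  "Vt_pairing P t v $ j = v \<bullet> (axis j 1, \<chi> k. partial_deriv j (P k) t)"
  by (simp add: Vt_pairing_def gradient_matrix_def inner_prod_def inner_axis)
    (simp add: inner_vec_def vector_matrix_mult_def mult.commute)

lemma orth_proj_Vt_eq_0_iff: "orth_proj (Vt P t) v = 0 \<longleftrightarrow> Vt_pairing P t v = 0"
  unfolding Vt_def orth_proj_span_eq_0_iff by (simp add: vec_eq_iff Vt_pairing_component)

lemma linear_Vt_pairing: "linear (Vt_pairing P t)"
  by (intro linearI) (simp_all add: Vt_pairing_def matrix_vector_right_distrib
      matrix_vector_mult_scaleR scaleR_right_distrib)

lemma dim_orth_proj_Vt: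
  assumes "subspace V"
  shows "dim (orth_proj (Vt P t) ` V) = dim (Vt_pairing P t ` V)"
  using assms orth_proj_Vt_eq_0_iff
  by (intro dim_image_eq_if_same_kernel linear_orth_proj linear_Vt_pairing)
    (auto simp: Vt_def)

lemma partial_deriv_quad_form:
  fixes M :: "real^'n::finite^'n"
  shows "partial_deriv j (quad_form M) t = t \<bullet> (M *v axis j 1 + transpose M *v axis j 1)"
proof -
  define e :: "real^'n" where "e = axis j 1"
  have "quad_form M (t + s *\<^sub>R e) =
      t \<bullet> (M *v t) + s * (t \<bullet> (M *v e) + e \<bullet> (M *v t)) + s\<^sup>2 * (e \<bullet> (M *v e))" for s
    by (simp add: quad_form_def matrix_vector_right_distrib matrix_vector_mult_scaleR
        inner_add_left inner_add_right power2_eq_square algebra_simps)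
  moreover have "((\<lambda>s. t \<bullet> (M *v t) + s * (t \<bullet> (M *v e) + e \<bullet> (M *v t)) + s\<^sup>2 * (e \<bullet> (M *v e)))
      has_real_derivative (t \<bullet> (M *v e) + e \<bullet> (M *v t))) (at 0)"
    by (auto intro!: derivative_eq_intros)
  moreover have "e \<bullet> (M *v t) = t \<bullet> (transpose M *v e)"
    by (metis dot_lmul_matrix inner_commute transpose_matrix_vector)
  ultimately show ?thesis
    unfolding partial_deriv_def e_def[symmetric] by (simp add: DERIV_imp_deriv inner_add_right)
qed

lemma gradient_matrix_quad_form_add:
  "gradient_matrix (\<lambda>k. quad_form (A k)) (t + u) =
     gradient_matrix (\<lambda>k. quad_form (A k)) t + gradient_matrix (\<lambda>k. quad_form (A k)) u"
  by (simp add: gradient_matrix_def partial_deriv_quad_form vec_eq_iff inner_add_left)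

lemma poly_deg_le_gradient_matrix_quad_form:
  "poly_deg_le 1 (\<lambda>t. gradient_matrix (\<lambda>k. quad_form (A k)) t $ k $ j)"
  unfolding gradient_matrix_def vec_lambda_beta partial_deriv_quad_form
  by (rule poly_deg_le_inner_left)

lemma poly_deg_le_Vt_pairing:
  assumes "\<And>k j. poly_deg_le 1 (\<lambda>t. gradient_matrix P t $ k $ j)"
  shows "poly_deg_le 1 (\<lambda>t. Vt_pairing P t v $ j)"
proof -
  have "poly_deg_le (0 + 1) (\<lambda>t. snd v $ k * gradient_matrix P t $ k $ j)" for k
    by (intro poly_deg_le_mult poly_deg_le_const assms)
  then have "poly_deg_le 1 (\<lambda>t. fst v $ j + (\<Sum>k\<in>UNIV. snd v $ k * gradient_matrix P t $ k $ j))"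
    by (intro poly_deg_le_add poly_deg_le_const poly_deg_le_sum) auto
  then show ?thesis
    by (simp add: Vt_pairing_def matrix_vector_mult_def transpose_def mult.commute)
qed

lemma dim_le_dim_Vt_pairing_add:
  assumes add: "gradient_matrix P (t + u) = gradient_matrix P t + gradient_matrix P u"
    and u: "det (gradient_matrix P u) \<noteq> 0" and V: "subspace V"
  shows "dim V \<le> dim (Vt_pairing P t ` V) + dim (Vt_pairing P (t + u) ` V)"
proof (rule dim_le_dim_image_add[OF linear_Vt_pairing linear_Vt_pairing V])
  fix v assume v0: "Vt_pairing P t v = 0" "Vt_pairing P (t + u) v = 0"
  have "Vt_pairing P (t + u) v = Vt_pairing P t v + transpose (gradient_matrix P u) *v snd v"
    by (simp add: Vt_pairing_def add vec_eq_iff transpose_def matrix_vector_mult_def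
        sum.distrib algebra_simps)
  then have "transpose (gradient_matrix P u) *v snd v = 0" using v0 by simp
  moreover have "det (transpose (gradient_matrix P u)) \<noteq> 0" using u by (simp add: det_transpose)
  ultimately have "snd v = 0" using det_nonzero_iff_kernel_trivial by blast
  with v0(1) have "fst v = 0" by (simp add: Vt_pairing_def)
  with \<open>snd v = 0\<close> show "v = 0" by (simp add: prod_eq_iff)
qed

lemma large_value_of_sum_bound:
  fixes d :: "'a \<Rightarrow> nat"
  assumes sum: "\<And>t. m \<le> d t + d (\<sigma> t)"
  shows "odd m \<Longrightarrow> \<exists>t. (real m + 1) / 2 \<le> real (d t)"
    and "even m \<Longrightarrow> (\<exists>t. real m / 2 + 1 \<le> real (d t)) \<or> (\<forall>t. real m / 2 \<le> real (d t))"
proof -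
  assume "odd m"
  then obtain q where "m = 2 * q + 1" by (rule oddE)
  then have "q + 1 \<le> d t \<or> q + 1 \<le> d (\<sigma> t)" for t using sum[of t] by linarith
  then obtain t where "q + 1 \<le> d t" by blast
  then have "real q + 1 \<le> real (d t)" by (metis of_nat_1 of_nat_add of_nat_le_iff)
  with \<open>m = 2 * q + 1\<close> show "\<exists>t. (real m + 1) / 2 \<le> real (d t)" by (intro exI[of _ t]) simp
next
  assume "even m"
  then obtain q where q: "m = 2 * q" by (rule evenE)
  show "(\<exists>t. real m / 2 + 1 \<le> real (d t)) \<or> (\<forall>t. real m / 2 \<le> real (d t))"
  proof (cases "\<forall>t. q \<le> d t")
    case False
    then obtain t where "d t < q" by (auto simp: not_le)
    then have "q + 1 \<le> d (\<sigma> t)" using sum[of t] q by linarith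
    then have "real q + 1 \<le> real (d (\<sigma> t))" by (metis of_nat_1 of_nat_add of_nat_le_iff)
    then show ?thesis using q by (intro disjI1 exI[of _ "\<sigma> t"]) simp
  qed (use q in auto)
qed

theorem mainTheorem18:
  fixes A :: "'n::finite \<Rightarrow> real^'n^'n"
    and V :: "((real^'n) \<times> (real^'n)) set"
  defines "P \<equiv> (\<lambda>k. quad_form (A k))"
  assumes d2: "CARD('n) \<ge> 2"
    and nondeg: "\<exists>t. det (\<chi> k j. partial_deriv j (P k) t) \<noteq> 0"
    and V: "subspace V"
  shows "(odd (dim V) \<longrightarrow>
           in_nonzero_poly_zero_set CARD('n)
             {t. real (dim (orth_proj (Vt P t) ` V)) < (real (dim V) + 1) / 2})
       \<and> (even (dim V) \<longrightarrow>
           (in_nonzero_poly_zero_set CARD('n)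
              {t. real (dim (orth_proj (Vt P t) ` V)) < real (dim V) / 2 + 1})
           \<or> (\<forall>t. real (dim (orth_proj (Vt P t) ` V)) \<ge> real (dim V) / 2))"
proof -
  obtain u where u: "det (gradient_matrix P u) \<noteq> 0"
    using nondeg by (auto simp: gradient_matrix_def)
  define d where "d t = dim (orth_proj (Vt P t) ` V)" for t
  have d: "d t = dim (Vt_pairing P t ` V)" for t
    using dim_orth_proj_Vt[OF V] by (simp add: d_def)
  have sum: "dim V \<le> d t + d (t + u)" for t
    unfolding d P_def
    by (rule dim_le_dim_Vt_pairing_add[OF gradient_matrix_quad_form_add u[unfolded P_def] V])
  have zero_set: "in_nonzero_poly_zero_set CARD('n) {t. real (d t) < r}"
    if "r \<le> real (d t1)" for r t1
  proof (rule in_nonzero_poly_zero_set_subset)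
    show "in_nonzero_poly_zero_set CARD('n) {t. d t < d t1}"
      unfolding d P_def
      by (intro in_nonzero_poly_zero_set_dim_image_less poly_deg_le_Vt_pairing
          poly_deg_le_gradient_matrix_quad_form)
  qed (use that in auto)
  show ?thesis
    using large_value_of_sum_bound[of "dim V" d "\<lambda>t. t + u", OF sum] zero_set
    unfolding d_def by (meson linorder_not_le)
qed

end
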